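(* Let $v$ be a typical weight and let $X$ be an initial space such that for every $f\in X$ and $0\le r<1$ the function $f_r(z)=f(rz)$ is in $X$ and $\sup_{0\le r<1}\|f_r\|_X\le C\|f\|_X$ for a constant $C$ independent of $f$. Let $T$ be an intrinsic operator on $\mathcal{H}(\mathbb{D})$ such that $T:X\to H_v$ is bounded and $Tf_r\in H_{v,0}$ for all $f\in X$, $0\le r<1$. Then the following are equivalent: (i) $T:X\to H_v$ is compact; (ii) $T:X\to H_{v,0}$ is compact; (iii) $\lim_{|z|\to1}v(z)\|T^*K_z^H\|=0$.
   Context: $\mathcal{H}(\mathbb{D})$ is the space of holomorphic functions on the unit disk $\mathbb{D}$ with the topology $\tau_{uc}$ of uniform convergence on compact subsets. A linear operator $T$ on $\mathcal{H}(\mathbb{D})$ is intrinsic if it maps $\tau_{uc}$-convergent sequences to $\tau_{uc}$-convergent sequences. An initial space is a Banach space $X\subset\mathcal{H}(\mathbb{D})$ containing the polynomials such that every sequence in the closed unit ball of $X$ has a subsequence converging in $\tau_{uc}$ to some function in $X$. A typical weight is a continuous radial $v:\mathbb{D}\to(0,1]$, non-increasing in $|z|$, with $v(z)\to0$ as $|z|\to1$. $H_v=\{f:\sup_z v(z)|f(z)|<\infty\}$ with that supremum as norm, $H_{v,0}=\{f:\lim_{|z|\to1}v(z)|f(z)|=0\}$ (closed subspace). $K_z^H$ is the point evaluation $g\mapsto g(z)$ on $H_v$ and $T^*:H_v^*\to X^*$ the adjoint of $T:X\to H_v$. *)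

theory Defs
  imports "HOL-Analysis.Analysis" "HOL-Computational_Algebra.Polynomial"
begin

type_synonym cfun = "complex \<Rightarrow> complex"

text \<open>Elements of H(D) are represented canonically as functions holomorphic on the
open unit disk and equal to 0 outside of it (so that equality of elements of H(D)
is equality of HOL functions).\<close>

definition restrictD :: "cfun \<Rightarrow> cfun" where
  "restrictD f = (\<lambda>z. if cmod z < 1 then f z else 0)"

definition HD :: "cfun set" where
  "HD = {f. f holomorphic_on ball 0 1 \<and> (\<forall>z. 1 \<le> cmod z \<longrightarrow> f z = 0)}"

definition uc_conv :: "(nat \<Rightarrow> cfun) \<Rightarrow> cfun \<Rightarrow> bool" where
  "uc_conv fs f \<longleftrightarrow> (\<forall>K. compact K \<and> K \<subseteq> ball 0 1 \<longrightarrow> uniform_limit K fs f sequentially)"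

definition linear_on_HD :: "(cfun \<Rightarrow> cfun) \<Rightarrow> bool" where
  "linear_on_HD T \<longleftrightarrow> (\<forall>f\<in>HD. T f \<in> HD) \<and>
     (\<forall>f\<in>HD. \<forall>g\<in>HD. T (\<lambda>z. f z + g z) = (\<lambda>z. T f z + T g z)) \<and>
     (\<forall>f\<in>HD. \<forall>c::complex. T (\<lambda>z. c * f z) = (\<lambda>z. c * T f z))"

definition intrinsic :: "(cfun \<Rightarrow> cfun) \<Rightarrow> bool" where
  "intrinsic T \<longleftrightarrow> linear_on_HD T \<and>
     (\<forall>fs f. (\<forall>n. fs n \<in> HD) \<and> f \<in> HD \<and> uc_conv fs f \<longrightarrow>
        (\<exists>g\<in>HD. uc_conv (\<lambda>n. T (fs n)) g))"

definition banach_subspace :: "cfun set \<Rightarrow> (cfun \<Rightarrow> real) \<Rightarrow> bool" where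
  "banach_subspace X nX \<longleftrightarrow> X \<subseteq> HD \<and> (\<lambda>z. 0) \<in> X \<and>
     (\<forall>f\<in>X. \<forall>g\<in>X. (\<lambda>z. f z + g z) \<in> X) \<and>
     (\<forall>f\<in>X. \<forall>c::complex. (\<lambda>z. c * f z) \<in> X) \<and>
     (\<forall>f\<in>X. nX f \<ge> 0) \<and>
     (\<forall>f\<in>X. nX f = 0 \<longleftrightarrow> f = (\<lambda>z. 0)) \<and>
     (\<forall>f\<in>X. \<forall>c::complex. nX (\<lambda>z. c * f z) = cmod c * nX f) \<and>
     (\<forall>f\<in>X. \<forall>g\<in>X. nX (\<lambda>z. f z + g z) \<le> nX f + nX g) \<and>
     (\<forall>fs. (\<forall>n. fs n \<in> X) \<and>
        (\<forall>e>0. \<exists>N. \<forall>m\<ge>N. \<forall>n\<ge>N. nX (\<lambda>z. fs m z - fs n z) < e) \<longrightarrow>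
        (\<exists>f\<in>X. (\<lambda>n. nX (\<lambda>z. fs n z - f z)) \<longlonglongrightarrow> 0))"

definition initial_space :: "cfun set \<Rightarrow> (cfun \<Rightarrow> real) \<Rightarrow> bool" where
  "initial_space X nX \<longleftrightarrow> banach_subspace X nX \<and>
     (\<forall>p. restrictD (poly (p :: complex poly)) \<in> X) \<and>
     (\<forall>fs. (\<forall>n. fs n \<in> X \<and> nX (fs n) \<le> 1) \<longrightarrow>
        (\<exists>(\<sigma>::nat\<Rightarrow>nat) f. strict_mono \<sigma> \<and> f \<in> X \<and> uc_conv (fs \<circ> \<sigma>) f))"

definition tends0_bdry :: "(complex \<Rightarrow> real) \<Rightarrow> bool" where
  "tends0_bdry h \<longleftrightarrow> (\<forall>e>0. \<exists>r<1. \<forall>z. r < cmod z \<and> cmod z < 1 \<longrightarrow> \<bar>h z\<bar> < e)"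

definition typical_weight :: "(complex \<Rightarrow> real) \<Rightarrow> bool" where
  "typical_weight v \<longleftrightarrow> continuous_on (ball 0 1) v \<and>
     (\<forall>z\<in>ball 0 1. 0 < v z \<and> v z \<le> 1) \<and>
     (\<forall>z\<in>ball 0 1. \<forall>w\<in>ball 0 1. cmod z \<le> cmod w \<longrightarrow> v w \<le> v z) \<and>
     tends0_bdry v"

definition Hv :: "(complex \<Rightarrow> real) \<Rightarrow> cfun set" where
  "Hv v = {f\<in>HD. bdd_above ((\<lambda>z. v z * cmod (f z)) ` ball 0 1)}"

definition normv :: "(complex \<Rightarrow> real) \<Rightarrow> cfun \<Rightarrow> real" where
  "normv v f = (SUP z\<in>ball 0 1. v z * cmod (f z))"

definition Hv0 :: "(complex \<Rightarrow> real) \<Rightarrow> cfun set" where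
  "Hv0 v = {f\<in>Hv v. tends0_bdry (\<lambda>z. v z * cmod (f z))}"

definition dil :: "real \<Rightarrow> cfun \<Rightarrow> cfun" where
  "dil r f = restrictD (\<lambda>z. f (complex_of_real r * z))"

definition bounded_op :: "cfun set \<Rightarrow> (cfun \<Rightarrow> real) \<Rightarrow> cfun set \<Rightarrow> (cfun \<Rightarrow> real)
    \<Rightarrow> (cfun \<Rightarrow> cfun) \<Rightarrow> bool" where
  "bounded_op X nX Y nY T \<longleftrightarrow> (\<forall>f\<in>X. T f \<in> Y) \<and> (\<exists>M. \<forall>f\<in>X. nY (T f) \<le> M * nX f)"

definition compact_op :: "cfun set \<Rightarrow> (cfun \<Rightarrow> real) \<Rightarrow> cfun set \<Rightarrow> (cfun \<Rightarrow> real)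
    \<Rightarrow> (cfun \<Rightarrow> cfun) \<Rightarrow> bool" where
  "compact_op X nX Y nY T \<longleftrightarrow> (\<forall>f\<in>X. T f \<in> Y) \<and>
     (\<forall>fs. (\<forall>n. fs n \<in> X \<and> nX (fs n) \<le> 1) \<longrightarrow>
        (\<exists>(\<sigma>::nat\<Rightarrow>nat) g. strict_mono \<sigma> \<and> g \<in> Y \<and> (\<lambda>n. nY (\<lambda>z. T (fs (\<sigma> n)) z - g z)) \<longlonglongrightarrow> 0))"

definition point_eval :: "complex \<Rightarrow> cfun \<Rightarrow> complex" where
  "point_eval z = (\<lambda>g. g z)"

definition adjoint_op :: "(cfun \<Rightarrow> cfun) \<Rightarrow> (cfun \<Rightarrow> complex) \<Rightarrow> (cfun \<Rightarrow> complex)" where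
  "adjoint_op T \<phi> = \<phi> \<circ> T"

definition dual_norm :: "cfun set \<Rightarrow> (cfun \<Rightarrow> real) \<Rightarrow> (cfun \<Rightarrow> complex) \<Rightarrow> real" where
  "dual_norm X nX \<phi> = (SUP f\<in>{f\<in>X. nX f \<le> 1}. cmod (\<phi> f))"

end

theory Submission
  imports Defs
begin

text \<open>The weighted sup norm only sees point values, so everything rests on the estimate
  \<open>|Tf(z)| \<le> \<parallel>T*K\<^sub>z\<parallel> \<parallel>f\<parallel>\<^sub>X\<close> and on the sequential \<open>\<tau>\<^sub>u\<^sub>c\<close>-continuity of the intrinsic operator \<open>T\<close>.
  If \<open>v(z) \<parallel>T*K\<^sub>z\<parallel> \<rightarrow> 0\<close>, a \<open>\<tau>\<^sub>u\<^sub>c\<close>-convergent subsequence of a bounded sequence (initial space)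
  has images converging uniformly on a disk \<open>|z| \<le> r\<close> and uniformly small near the boundary,
  hence converging in \<open>H\<^sub>v\<close>. Conversely, if \<open>T\<close> is compact into \<open>H\<^sub>v\<^sub>,\<^sub>0\<close> but
  \<open>v(z\<^sub>n) \<parallel>T*K\<^bsub>z\<^sub>n\<^esub>\<parallel> \<ge> e\<close> with \<open>|z\<^sub>n| \<rightarrow> 1\<close>, nearly norming functions \<open>f\<^sub>n\<close> contradict the
  existence of a norm limit in \<open>H\<^sub>v\<^sub>,\<^sub>0\<close>. Finally, compactness into \<open>H\<^sub>v\<close> already forces
  \<open>T(X) \<subseteq> H\<^sub>v\<^sub>,\<^sub>0\<close>: as \<open>f\<^sub>r \<rightarrow> f\<close> in \<open>\<tau>\<^sub>u\<^sub>c\<close> when \<open>r \<rightarrow> 1\<close>, \<open>Tf\<close> is an \<open>H\<^sub>v\<close>-limit of images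
  \<open>T f\<^sub>r \<in> H\<^sub>v\<^sub>,\<^sub>0\<close>, and \<open>H\<^sub>v\<^sub>,\<^sub>0\<close> is closed.\<close>

section \<open>Locally uniform convergence and intrinsic operators\<close>

lemma HD_eqI:
  assumes "f \<in> HD" and "g \<in> HD" and "\<And>z. z \<in> ball 0 1 \<Longrightarrow> f z = g z"
  shows "f = g"
proof
  fix z
  show "f z = g z"
    using assms by (cases "cmod z < 1") (auto simp: HD_def)
qed

lemma uc_conv_imp_tendsto:
  assumes "uc_conv fs f" and "z \<in> ball 0 1"
  shows "(\<lambda>n. fs n z) \<longlonglongrightarrow> f z"
proof -
  have "uniform_limit {z} fs f sequentially"
    using assms unfolding uc_conv_def by (meson compact_sing empty_subsetI insert_subset)
  then show ?thesis
    by (rule tendsto_uniform_limitI) simp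
qed

lemma uc_conv_compose:
  assumes "uc_conv fs f" and "filterlim r sequentially sequentially"
  shows "uc_conv (\<lambda>n. fs (r n)) f"
  using assms unfolding uc_conv_def by (metis filterlim_compose)

lemma uc_conv_subseq:
  "uc_conv fs f \<Longrightarrow> strict_mono \<sigma> \<Longrightarrow> uc_conv (fs \<circ> \<sigma>) f"
  using uc_conv_compose[OF _ filterlim_subseq] by (simp add: o_def)

lemma uc_conv_interleave_const:
  assumes "uc_conv fs f"
  shows "uc_conv (\<lambda>n. if even n then fs (n div 2) else f) f"
  unfolding uc_conv_def uniform_limit_iff
proof (intro allI impI)
  fix K :: "complex set" and e :: real
  assume "compact K \<and> K \<subseteq> ball 0 1" and "e > 0"
  moreover have "uc_conv (\<lambda>n. fs (n div 2)) f"
    by (simp add: uc_conv_compose[OF assms] filterlim_at_top_div_const_nat)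
  ultimately have "\<forall>\<^sub>F n in sequentially. \<forall>x\<in>K. dist (fs (n div 2) x) (f x) < e"
    by (auto simp: uc_conv_def uniform_limit_iff)
  then show "\<forall>\<^sub>F n in sequentially. \<forall>x\<in>K. dist ((if even n then fs (n div 2) else f) x) (f x) < e"
    by (rule eventually_mono) (simp add: \<open>e > 0\<close>)
qed

lemma intrinsic_HD: "intrinsic T \<Longrightarrow> f \<in> HD \<Longrightarrow> T f \<in> HD"
  by (simp add: intrinsic_def linear_on_HD_def)

lemma intrinsic_scale: "intrinsic T \<Longrightarrow> f \<in> HD \<Longrightarrow> T (\<lambda>z. c * f z) = (\<lambda>z. c * T f z)"
  by (simp add: intrinsic_def linear_on_HD_def)

lemma intrinsic_add:
  "intrinsic T \<Longrightarrow> f \<in> HD \<Longrightarrow> g \<in> HD \<Longrightarrow> T (\<lambda>z. f z + g z) = (\<lambda>z. T f z + T g z)"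
  by (simp add: intrinsic_def linear_on_HD_def)

lemma intrinsic_diff:
  assumes T: "intrinsic T" and f: "f \<in> HD" and g: "g \<in> HD"
  shows "T (\<lambda>z. f z - g z) = (\<lambda>z. T f z - T g z)"
proof -
  have "(\<lambda>z. - g z) \<in> HD"
    using g by (auto simp: HD_def intro!: holomorphic_intros)
  then have "T (\<lambda>z. f z + - g z) = (\<lambda>z. T f z + T (\<lambda>z. - g z) z)"
    by (rule intrinsic_add[OF T f])
  moreover have "T (\<lambda>z. - g z) = (\<lambda>z. - T g z)"
    using intrinsic_scale[OF T g, of "-1"] by simp
  ultimately show ?thesis by simp
qed

lemma intrinsic_zero: "intrinsic T \<Longrightarrow> T (\<lambda>z. 0) = (\<lambda>z. 0)"
  using intrinsic_scale[of T "\<lambda>z. 0" 0] by (simp add: HD_def)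

text \<open>Interleaving the sequence with its limit identifies the limit of the images: the odd terms
  of the image sequence are all \<open>T f\<close>.\<close>

lemma intrinsic_uc_conv:
  assumes T: "intrinsic T" and fs: "\<And>n. fs n \<in> HD" and f: "f \<in> HD" and conv: "uc_conv fs f"
  shows "uc_conv (\<lambda>n. T (fs n)) (T f)"
proof -
  define k where "k n = (if even n then fs (n div 2) else f)" for n
  have "\<forall>n. k n \<in> HD" and "uc_conv k f"
    using fs f uc_conv_interleave_const[OF conv] by (simp_all add: k_def[abs_def])
  then obtain g where g: "g \<in> HD" and Tk: "uc_conv (\<lambda>n. T (k n)) g"
    using T f unfolding intrinsic_def by blast
  have "g = T f"
  proof (rule HD_eqI[OF g intrinsic_HD[OF T f]])
    fix z :: complex assume z: "z \<in> ball 0 1"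
    have "(\<lambda>n. T (k (2 * n + 1)) z) \<longlonglongrightarrow> g z"
      using uc_conv_imp_tendsto[OF uc_conv_subseq[OF Tk] z, of "\<lambda>n. 2 * n + 1"]
      by (simp add: strict_mono_def o_def)
    then show "g z = T f z"
      by (simp add: k_def LIMSEQ_const_iff)
  qed
  moreover have "uc_conv (\<lambda>n. T (k (2 * n))) g"
    using uc_conv_subseq[OF Tk, of "\<lambda>n. 2 * n"] by (simp add: strict_mono_def o_def)
  ultimately show ?thesis
    by (simp add: k_def)
qed

lemma compact_in_unit_ball_imp_cball:
  fixes K :: "complex set"
  assumes "compact K" and "K \<subseteq> ball 0 1"
  obtains \<rho> where "0 \<le> \<rho>" and "\<rho> < 1" and "K \<subseteq> cball 0 \<rho>"
proof (cases "K = {}")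
  case True
  then show ?thesis using that[of 0] by simp
next
  case False
  then obtain w where "w \<in> K" and w: "\<forall>y\<in>K. norm y \<le> norm w"
    using continuous_attains_sup[OF assms(1) False continuous_on_norm_id] by blast
  have "norm w < 1"
    using \<open>w \<in> K\<close> assms(2) by auto
  moreover have "K \<subseteq> cball 0 (norm w)"
    using w by auto
  ultimately show ?thesis
    using that[of "norm w"] by simp
qed

lemma uc_conv_dil:
  assumes f: "f \<in> HD" and r: "\<And>n. 0 \<le> r n \<and> r n < 1" and lim: "r \<longlonglongrightarrow> 1"
  shows "uc_conv (\<lambda>n. dil (r n) f) f"
  unfolding uc_conv_def
proof (intro allI impI)
  fix K :: "complex set" assume "compact K \<and> K \<subseteq> ball 0 1"
  then obtain \<rho> where \<rho>: "0 \<le> \<rho>" "\<rho> < 1" and K: "K \<subseteq> cball 0 \<rho>" "K \<subseteq> ball 0 1"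
    using compact_in_unit_ball_imp_cball by metis
  have "uniformly_continuous_on (cball 0 \<rho>) f"
    using f \<rho> by (intro compact_uniformly_continuous holomorphic_on_imp_continuous_on)
      (auto simp: HD_def elim!: holomorphic_on_subset)
  moreover have "uniform_limit K (\<lambda>n z. complex_of_real (r n) * z) (\<lambda>z. z) sequentially"
  proof (rule uniform_limitI)
    fix e :: real assume "e > 0"
    then have "\<forall>\<^sub>F n in sequentially. 1 - r n < e"
      using lim by (auto simp: tendsto_iff dist_real_def elim!: eventually_mono)
    then show "\<forall>\<^sub>F n in sequentially. \<forall>z\<in>K. dist (complex_of_real (r n) * z) z < e"
    proof (rule eventually_mono, intro ballI)
      fix n z assume "1 - r n < e" and "z \<in> K"
      have "dist (complex_of_real (r n) * z) z = cmod (complex_of_real (1 - r n) * z)"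
        by (simp add: dist_commute dist_norm left_diff_distrib)
      also have "\<dots> = (1 - r n) * cmod z"
        using r[of n] by (simp add: norm_mult del: of_real_diff)
      also have "\<dots> \<le> 1 - r n"
        using r[of n] K \<open>z \<in> K\<close> by (intro mult_left_le) auto
      finally show "dist (complex_of_real (r n) * z) z < e"
        using \<open>1 - r n < e\<close> by linarith
    qed
  qed
  moreover have shrink: "cmod (complex_of_real (r n) * z) \<le> cmod z" for n z
    using r[of n] by (simp add: norm_mult mult_left_le_one_le)
  then have "(\<lambda>z. complex_of_real (r n) * z) ` K \<subseteq> cball 0 \<rho>" for n
    using K(1) by (force intro: order_trans[OF shrink])
  ultimately have "uniform_limit K (\<lambda>n z. f (complex_of_real (r n) * z)) (f \<circ> (\<lambda>z. z)) sequentially"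
    using K(1) by (intro uniform_limit_compose[where U = "cball 0 \<rho>"] always_eventually) auto
  moreover have "dil (r n) f z = f (complex_of_real (r n) * z)" if "z \<in> K" for n z
    using that K(2) shrink[of n z] by (auto simp: dil_def restrictD_def)
  ultimately show "uniform_limit K (\<lambda>n. dil (r n) f) f sequentially"
    by (subst uniform_limit_cong') auto
qed

section \<open>The boundary filter\<close>

definition at_bdry :: "complex filter" where
  "at_bdry = (INF r\<in>{..<1}. principal {z. r < cmod z \<and> cmod z < 1})"

lemma eventually_at_bdry:
  "eventually P at_bdry \<longleftrightarrow> (\<exists>r<1. \<forall>z. r < cmod z \<and> cmod z < 1 \<longrightarrow> P z)"
  unfolding at_bdry_def
proof (subst eventually_INF_base)
  show "\<exists>c\<in>{..<1}. principal {z. c < cmod z \<and> cmod z < 1} \<le>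
          inf (principal {z. a < cmod z \<and> cmod z < 1}) (principal {z. b < cmod z \<and> cmod z < 1})"
    if "a \<in> {..<1::real}" "b \<in> {..<1::real}" for a b
    using that by (intro bexI[of _ "max a b"]) auto
qed (auto simp: eventually_principal)

lemma eventually_at_bdry_in_ball: "\<forall>\<^sub>F z in at_bdry. z \<in> ball 0 1"
  unfolding eventually_at_bdry by (intro exI[of _ 0]) auto

lemma tends0_bdry_iff_tendsto: "tends0_bdry h \<longleftrightarrow> (h \<longlongrightarrow> 0) at_bdry"
  unfolding tends0_bdry_def tendsto_iff eventually_at_bdry by simp

lemma not_tends0_bdry_imp_seq:
  assumes "\<not> tends0_bdry h"
  obtains e zs where "e > 0" and "\<And>n. zs n \<in> ball 0 1" and "\<And>n. e \<le> \<bar>h (zs n)\<bar>"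
    and "filterlim zs at_bdry sequentially"
proof -
  obtain e where "e > 0" and e: "\<forall>r<1. \<exists>z. r < cmod z \<and> cmod z < 1 \<and> e \<le> \<bar>h z\<bar>"
    using assms by (simp add: tends0_bdry_def not_less) (metis not_le)
  have "\<forall>n. \<exists>z. 1 - inverse (Suc n) < cmod z \<and> cmod z < 1 \<and> e \<le> \<bar>h z\<bar>"
  proof
    fix n
    show "\<exists>z. 1 - inverse (Suc n) < cmod z \<and> cmod z < 1 \<and> e \<le> \<bar>h z\<bar>"
      using e[rule_format, of "1 - inverse (Suc n)"] by simp
  qed
  then obtain zs where zs: "\<And>n. 1 - inverse (Suc n) < cmod (zs n) \<and> cmod (zs n) < 1 \<and> e \<le> \<bar>h (zs n)\<bar>"
    by metis
  have "filterlim zs at_bdry sequentially"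
    unfolding filterlim_iff eventually_at_bdry
  proof (intro allI impI, elim exE conjE)
    fix P and r :: real assume "r < 1" and P: "\<forall>z. r < cmod z \<and> cmod z < 1 \<longrightarrow> P z"
    obtain N where N: "inverse (Suc N) < 1 - r"
      using reals_Archimedean \<open>r < 1\<close> by (metis diff_gt_0_iff_gt)
    have "r < cmod (zs n)" if "N \<le> n" for n
    proof -
      have "inverse (real (Suc n)) \<le> inverse (Suc N)"
        using that by (intro le_imp_inverse_le) auto
      then show ?thesis using N zs[of n] by linarith
    qed
    then show "\<forall>\<^sub>F n in sequentially. P (zs n)"
      using P zs unfolding eventually_sequentially by blast
  qed
  with \<open>e > 0\<close> zs show ?thesis
    using that by auto
qed

section \<open>Weighted spaces\<close>

lemma normv_upper: "h \<in> Hv v \<Longrightarrow> z \<in> ball 0 1 \<Longrightarrow> v z * cmod (h z) \<le> normv v h"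
  unfolding normv_def Hv_def by (auto intro: cSUP_upper)

lemma normv_least: "(\<And>z. z \<in> ball 0 1 \<Longrightarrow> v z * cmod (h z) \<le> B) \<Longrightarrow> normv v h \<le> B"
  unfolding normv_def by (rule cSUP_least) auto

lemma normv_nonneg:
  assumes "\<And>z. z \<in> ball 0 1 \<Longrightarrow> 0 \<le> v z" and "h \<in> Hv v"
  shows "0 \<le> normv v h"
proof -
  have "0 \<le> v 0 * cmod (h 0)"
    using assms(1) by simp
  also have "\<dots> \<le> normv v h"
    using assms(2) by (rule normv_upper) simp
  finally show ?thesis .
qed

lemma Hv_diff:
  assumes v: "\<And>z. z \<in> ball 0 1 \<Longrightarrow> 0 \<le> v z" and f: "f \<in> Hv v" and g: "g \<in> Hv v"
  shows "(\<lambda>z. f z - g z) \<in> Hv v"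
proof -
  have "v z * cmod (f z - g z) \<le> normv v f + normv v g" if "z \<in> ball 0 1" for z
  proof -
    have "v z * cmod (f z - g z) \<le> v z * cmod (f z) + v z * cmod (g z)"
      using v[OF that] by (simp add: norm_triangle_ineq4 mult_left_mono flip: distrib_left)
    also have "\<dots> \<le> normv v f + normv v g"
      using normv_upper[OF f that] normv_upper[OF g that] by linarith
    finally show ?thesis .
  qed
  moreover have "(\<lambda>z. f z - g z) \<in> HD"
    using f g by (auto simp: Hv_def HD_def intro!: holomorphic_intros)
  ultimately show ?thesis
    unfolding Hv_def by (auto intro!: bdd_aboveI2)
qed

lemma tendsto_of_normv_tendsto:
  assumes v: "\<And>z. z \<in> ball 0 1 \<Longrightarrow> 0 \<le> v z" and F: "\<And>n. F n \<in> Hv v" and g: "g \<in> Hv v"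
    and lim: "(\<lambda>n. normv v (\<lambda>z. F n z - g z)) \<longlonglongrightarrow> 0"
    and z: "z \<in> ball 0 1" and vz: "v z > 0"
  shows "(\<lambda>n. F n z) \<longlonglongrightarrow> g z"
proof -
  have le: "norm (F n z - g z) \<le> normv v (\<lambda>z. F n z - g z) / v z" for n
    using normv_upper[OF Hv_diff[OF v F g] z] vz by (simp add: pos_le_divide_eq mult.commute)
  have "(\<lambda>n. F n z - g z) \<longlonglongrightarrow> 0"
    using Lim_null_comparison[OF always_eventually[OF allI[OF le]] tendsto_divide_zero[OF lim]] .
  then show ?thesis
    by (rule LIM_zero_cancel)
qed

lemma Hv0_scale:
  assumes v: "\<And>z. z \<in> ball 0 1 \<Longrightarrow> 0 \<le> v z" and h: "h \<in> Hv0 v"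
  shows "(\<lambda>z. c * h z) \<in> Hv0 v"
proof -
  have "v z * cmod (c * h z) \<le> cmod c * normv v h" if "z \<in> ball 0 1" for z
    using mult_left_mono[OF normv_upper[of h v z] norm_ge_zero[of c]] h that
    by (simp add: Hv0_def norm_mult algebra_simps)
  moreover have "(\<lambda>z. c * h z) \<in> HD"
    using h by (auto simp: Hv0_def Hv_def HD_def intro!: holomorphic_intros)
  ultimately have "(\<lambda>z. c * h z) \<in> Hv v"
    unfolding Hv_def by (auto intro!: bdd_aboveI2)
  moreover have "((\<lambda>z. cmod c * (v z * cmod (h z))) \<longlongrightarrow> 0) at_bdry"
    using h tendsto_mult_right_zero by (auto simp: Hv0_def tends0_bdry_iff_tendsto)
  ultimately show ?thesis
    by (simp add: Hv0_def tends0_bdry_iff_tendsto norm_mult ac_simps)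
qed

lemma Hv0_closed:
  assumes v: "\<And>z. z \<in> ball 0 1 \<Longrightarrow> 0 \<le> v z" and F: "\<And>n. F n \<in> Hv0 v" and g: "g \<in> Hv v"
    and lim: "(\<lambda>n. normv v (\<lambda>z. F n z - g z)) \<longlonglongrightarrow> 0"
  shows "g \<in> Hv0 v"
proof -
  have bound: "\<forall>\<^sub>F z in at_bdry. v z * cmod (g z) < e" if "e > 0" for e
  proof -
    obtain n where "\<forall>m\<ge>n. norm (normv v (\<lambda>z. F m z - g z) - 0) < e / 2"
      using LIMSEQ_D[OF lim, of "e / 2"] \<open>e > 0\<close> by auto
    then have n: "normv v (\<lambda>z. F n z - g z) < e / 2"
      by auto
    have "\<forall>\<^sub>F z in at_bdry. v z * cmod (F n z) < e / 2"
      using F[of n] \<open>e > 0\<close> by (auto simp: Hv0_def tends0_bdry_iff_tendsto tendsto_iff dist_real_def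
        elim!: allE[of _ "e / 2"] eventually_mono)
    with eventually_at_bdry_in_ball show ?thesis
    proof eventually_elim
      case (elim z)
      have "v z * cmod (g z) \<le> v z * cmod (F n z) + v z * cmod (F n z - g z)"
        using v[OF elim(1)] norm_triangle_ineq4[of "F n z" "F n z - g z"]
        by (simp add: mult_left_mono flip: distrib_left)
      also have "\<dots> < e"
        using elim(2) n normv_upper[OF Hv_diff[OF v _ g] elim(1), of "F n"] F[of n]
        by (simp add: Hv0_def)
      finally show ?case .
    qed
  qed
  have "tends0_bdry (\<lambda>z. v z * cmod (g z))"
    unfolding tends0_bdry_iff_tendsto tendsto_iff
  proof (intro allI impI)
    fix e :: real assume "e > 0"
    show "\<forall>\<^sub>F z in at_bdry. dist (v z * cmod (g z)) 0 < e"
      using bound[OF \<open>e > 0\<close>] eventually_at_bdry_in_ball by eventually_elim (use v in auto)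
  qed
  with g show ?thesis
    by (simp add: Hv0_def)
qed

lemma compact_op_Hv0_imp_Hv:
  "compact_op X nX (Hv0 v) (normv v) T \<Longrightarrow> compact_op X nX (Hv v) (normv v) T"
  unfolding compact_op_def Hv0_def by blast

lemma compact_op_Hv_imp_Hv0:
  assumes v: "\<And>z. z \<in> ball 0 1 \<Longrightarrow> 0 \<le> v z" and T: "compact_op X nX (Hv v) (normv v) T"
    and Hv0: "\<And>f. f \<in> X \<Longrightarrow> T f \<in> Hv0 v"
  shows "compact_op X nX (Hv0 v) (normv v) T"
  unfolding compact_op_def
proof (intro conjI ballI allI impI)
  fix fs :: "nat \<Rightarrow> cfun" assume fs: "\<forall>n. fs n \<in> X \<and> nX (fs n) \<le> 1"
  then obtain \<sigma> g where "strict_mono \<sigma>" and "g \<in> Hv v"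
    and lim: "(\<lambda>n. normv v (\<lambda>z. T (fs (\<sigma> n)) z - g z)) \<longlonglongrightarrow> 0"
    using T unfolding compact_op_def by blast
  moreover have "g \<in> Hv0 v"
    using fs by (intro Hv0_closed[OF v _ \<open>g \<in> Hv v\<close> lim] Hv0) auto
  ultimately show "\<exists>\<sigma> g. strict_mono \<sigma> \<and> g \<in> Hv0 v \<and> (\<lambda>n. normv v (\<lambda>z. T (fs (\<sigma> n)) z - g z)) \<longlonglongrightarrow> 0"
    by blast
qed (rule Hv0)

section \<open>Intrinsic operators into \<open>H\<^sub>v\<close>\<close>

locale intrinsic_op_into_Hv =
  fixes v :: "complex \<Rightarrow> real" and X :: "cfun set" and nX :: "cfun \<Rightarrow> real"
    and T :: "cfun \<Rightarrow> cfun"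
  assumes weight: "typical_weight v"
    and initial: "initial_space X nX"
    and intrinsic: "intrinsic T"
    and bounded: "bounded_op X nX (Hv v) (normv v) T"
begin

lemma v_pos: "z \<in> ball 0 1 \<Longrightarrow> 0 < v z"
  using weight by (simp add: typical_weight_def)

lemma v_nonneg: "z \<in> ball 0 1 \<Longrightarrow> 0 \<le> v z"
  using v_pos less_imp_le by blast

lemma v_le_1: "z \<in> ball 0 1 \<Longrightarrow> v z \<le> 1"
  using weight by (simp add: typical_weight_def)

lemma banach: "banach_subspace X nX"
  using initial by (simp add: initial_space_def)

lemma X_HD: "f \<in> X \<Longrightarrow> f \<in> HD"
  using banach by (auto simp: banach_subspace_def)

lemma zero_in_X: "(\<lambda>z. 0) \<in> X"
  using banach by (simp add: banach_subspace_def)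

lemma nX_zero: "nX (\<lambda>z. 0) = 0"
  using banach zero_in_X by (simp add: banach_subspace_def)

lemma nX_nonneg: "f \<in> X \<Longrightarrow> 0 \<le> nX f"
  using banach by (simp add: banach_subspace_def)

lemma nX_eq_0D: "f \<in> X \<Longrightarrow> nX f = 0 \<Longrightarrow> f = (\<lambda>z. 0)"
  using banach by (simp add: banach_subspace_def)

lemma scale_in_X: "f \<in> X \<Longrightarrow> (\<lambda>z. c * f z) \<in> X"
  using banach by (simp add: banach_subspace_def)

lemma nX_scale: "f \<in> X \<Longrightarrow> nX (\<lambda>z. c * f z) = cmod c * nX f"
  using banach by (simp add: banach_subspace_def)

lemma add_in_X: "f \<in> X \<Longrightarrow> g \<in> X \<Longrightarrow> (\<lambda>z. f z + g z) \<in> X"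
  using banach by (simp add: banach_subspace_def)

lemma nX_add_le: "f \<in> X \<Longrightarrow> g \<in> X \<Longrightarrow> nX (\<lambda>z. f z + g z) \<le> nX f + nX g"
  using banach by (simp add: banach_subspace_def)

lemma diff_in_X: "f \<in> X \<Longrightarrow> g \<in> X \<Longrightarrow> (\<lambda>z. f z - g z) \<in> X"
  using add_in_X[of f "\<lambda>z. (-1) * g z"] scale_in_X[of g "-1"] by simp

lemma nX_diff_le: "f \<in> X \<Longrightarrow> g \<in> X \<Longrightarrow> nX (\<lambda>z. f z - g z) \<le> nX f + nX g"
  using nX_add_le[of f "\<lambda>z. (-1) * g z"] scale_in_X[of g "-1"] nX_scale[of g "-1"] by simp

lemma T_Hv: "f \<in> X \<Longrightarrow> T f \<in> Hv v"
  using bounded by (simp add: bounded_op_def)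

abbreviation adj_eval_norm :: "complex \<Rightarrow> real" where
  "adj_eval_norm z \<equiv> dual_norm X nX (adjoint_op T (point_eval z))"

lemma adj_eval_norm_eq: "adj_eval_norm z = (SUP f\<in>{f\<in>X. nX f \<le> 1}. cmod (T f z))"
  by (simp add: dual_norm_def adjoint_op_def point_eval_def)

lemma bdd_above_eval:
  assumes z: "z \<in> ball 0 1"
  shows "bdd_above ((\<lambda>f. cmod (T f z)) ` {f\<in>X. nX f \<le> 1})"
proof -
  obtain M where M: "\<forall>f\<in>X. normv v (T f) \<le> M * nX f"
    using bounded by (auto simp: bounded_op_def)
  have "cmod (T f z) \<le> \<bar>M\<bar> / v z" if "f \<in> X" and "nX f \<le> 1" for f
  proof -
    have "v z * cmod (T f z) \<le> M * nX f"
      using normv_upper[OF T_Hv[OF \<open>f \<in> X\<close>] z] M \<open>f \<in> X\<close> by fastforce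
    also have "\<dots> \<le> \<bar>M\<bar>"
      using that nX_nonneg[of f] mult_left_le[of "nX f" "\<bar>M\<bar>"]
        mult_right_mono[OF abs_ge_self[of M], of "nX f"] by linarith
    finally show ?thesis
      using v_pos[OF z] by (simp add: pos_le_divide_eq mult.commute)
  qed
  then show ?thesis
    by (auto intro!: bdd_aboveI2)
qed

lemma norm_T_le_adj_eval_norm:
  "f \<in> X \<Longrightarrow> nX f \<le> 1 \<Longrightarrow> z \<in> ball 0 1 \<Longrightarrow> cmod (T f z) \<le> adj_eval_norm z"
  unfolding adj_eval_norm_eq by (rule cSUP_upper[OF _ bdd_above_eval]) auto

lemma adj_eval_norm_nonneg: "z \<in> ball 0 1 \<Longrightarrow> 0 \<le> adj_eval_norm z"
  using norm_T_le_adj_eval_norm[OF zero_in_X, of z] nX_zero order_trans[OF norm_ge_zero] by simp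

lemma less_adj_eval_norm_imp:
  assumes "z \<in> ball 0 1" and "y < adj_eval_norm z"
  obtains f where "f \<in> X" and "nX f \<le> 1" and "y < cmod (T f z)"
proof -
  have "{f\<in>X. nX f \<le> 1} \<noteq> {}"
    using zero_in_X nX_zero by auto
  then show ?thesis
    using assms that unfolding adj_eval_norm_eq by (auto simp: less_cSUP_iff[OF _ bdd_above_eval])
qed

lemma norm_T_le:
  assumes f: "f \<in> X" and z: "z \<in> ball 0 1"
  shows "cmod (T f z) \<le> adj_eval_norm z * nX f"
proof (cases "nX f = 0")
  case True
  then show ?thesis
    using nX_eq_0D[OF f] intrinsic_zero[OF intrinsic] by simp
next
  case False
  then have n: "nX f > 0"
    using nX_nonneg[OF f] by simp
  define c where "c = complex_of_real (inverse (nX f))"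
  have "cmod (T (\<lambda>w. c * f w) z) \<le> adj_eval_norm z"
    using n f z by (intro norm_T_le_adj_eval_norm scale_in_X) (simp_all add: nX_scale c_def norm_inverse)
  then have "cmod (c * T f z) \<le> adj_eval_norm z"
    by (simp only: intrinsic_scale[OF intrinsic X_HD[OF f]])
  moreover have "cmod (c * T f z) = cmod (T f z) / nX f"
    using n by (simp add: c_def norm_mult divide_inverse mult.commute del: of_real_inverse)
  ultimately show ?thesis
    using n by (simp add: divide_le_eq mult.commute)
qed

lemma T_Hv0_of_tends0:
  assumes t: "tends0_bdry (\<lambda>z. v z * adj_eval_norm z)" and f: "f \<in> X"
  shows "T f \<in> Hv0 v"
proof -
  have lim: "((\<lambda>z. v z * adj_eval_norm z * nX f) \<longlongrightarrow> 0) at_bdry"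
    using t by (simp add: tends0_bdry_iff_tendsto tendsto_mult_left_zero)
  have lower: "\<forall>\<^sub>F z in at_bdry. 0 \<le> v z * cmod (T f z)"
    using eventually_at_bdry_in_ball
    by (rule eventually_mono) (rule mult_nonneg_nonneg[OF v_nonneg norm_ge_zero])
  have upper: "\<forall>\<^sub>F z in at_bdry. v z * cmod (T f z) \<le> v z * adj_eval_norm z * nX f"
    using eventually_at_bdry_in_ball
  proof (rule eventually_mono)
    fix z :: complex assume z: "z \<in> ball 0 1"
    show "v z * cmod (T f z) \<le> v z * adj_eval_norm z * nX f"
      using mult_left_mono[OF norm_T_le[OF f z] v_nonneg[OF z]] by (simp only: mult.assoc)
  qed
  have "((\<lambda>z. v z * cmod (T f z)) \<longlongrightarrow> 0) at_bdry"
    using real_tendsto_sandwich[OF lower upper tendsto_const lim] .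
  then show ?thesis
    using T_Hv[OF f] by (simp add: Hv0_def tends0_bdry_iff_tendsto)
qed

text \<open>On the disk \<open>|z| \<le> max r 0\<close> the convergence is uniform and \<open>v \<le> 1\<close>; outside it
  \<open>v(z) \<parallel>T*K\<^sub>z\<parallel> < e'\<close>, while \<open>\<parallel>f\<^sub>n - f\<parallel>\<^sub>X\<close> stays bounded.\<close>

lemma normv_T_diff_tendsto_0:
  assumes t: "tends0_bdry (\<lambda>z. v z * adj_eval_norm z)"
    and fs: "\<And>n. fs n \<in> X" and f: "f \<in> X" and B: "\<And>n. nX (\<lambda>z. fs n z - f z) \<le> B"
    and conv: "uc_conv (\<lambda>n. T (fs n)) (T f)"
  shows "(\<lambda>n. normv v (\<lambda>z. T (fs n) z - T f z)) \<longlonglongrightarrow> 0"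
proof (rule LIMSEQ_I)
  fix e :: real assume "e > 0"
  define e' where "e' = e / (2 * (\<bar>B\<bar> + 1))"
  have "e' > 0"
    using \<open>e > 0\<close> by (simp add: e'_def add_pos_nonneg)
  then obtain r where "r < 1" and r: "\<forall>z. r < cmod z \<and> cmod z < 1 \<longrightarrow> \<bar>v z * adj_eval_norm z\<bar> < e'"
    using t unfolding tends0_bdry_def by blast
  define K where "K = cball (0::complex) (max r 0)"
  have "compact K \<and> K \<subseteq> ball 0 1"
    using \<open>r < 1\<close> by (auto simp: K_def)
  then have "uniform_limit K (\<lambda>n. T (fs n)) (T f) sequentially"
    using conv by (simp add: uc_conv_def)
  then obtain N where N: "\<forall>n\<ge>N. \<forall>z\<in>K. dist (T (fs n) z) (T f z) < e / 2"
    using \<open>e > 0\<close> unfolding uniform_limit_sequentially_iff by (meson half_gt_zero)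
  have small: "normv v (\<lambda>z. T (fs n) z - T f z) \<le> e / 2" if "n \<ge> N" for n
  proof (rule normv_least)
    fix z :: complex assume z: "z \<in> ball 0 1"
    show "v z * cmod (T (fs n) z - T f z) \<le> e / 2"
    proof (cases "z \<in> K")
      case True
      then have "cmod (T (fs n) z - T f z) < e / 2"
        using N that by (simp add: dist_norm)
      then show ?thesis
        using mult_right_mono[OF v_le_1[OF z] norm_ge_zero[of "T (fs n) z - T f z"]] by linarith
    next
      case False
      have diff: "(\<lambda>z. fs n z - f z) \<in> X"
        using diff_in_X[OF fs f] .
      have "v z * cmod (T (fs n) z - T f z) = v z * cmod (T (\<lambda>z. fs n z - f z) z)"
        by (simp add: intrinsic_diff[OF intrinsic X_HD[OF fs] X_HD[OF f]])
      also have "\<dots> \<le> (v z * adj_eval_norm z) * nX (\<lambda>z. fs n z - f z)"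
        using mult_left_mono[OF norm_T_le[OF diff z] v_nonneg[OF z]] by (simp add: mult.assoc)
      also have "\<dots> \<le> e' * (\<bar>B\<bar> + 1)"
      proof (rule mult_mono)
        have "r < cmod z" and "cmod z < 1"
          using False z by (auto simp: K_def)
        then show "v z * adj_eval_norm z \<le> e'"
          using r abs_ge_self[of "v z * adj_eval_norm z"] by fastforce
        show "nX (\<lambda>z. fs n z - f z) \<le> \<bar>B\<bar> + 1"
          using B[of n] by linarith
      qed (use \<open>e' > 0\<close> nX_nonneg[OF diff] in auto)
      also have "\<dots> = e / 2"
        using abs_ge_zero[of B] by (simp add: e'_def field_simps add_nonneg_pos)
      finally show ?thesis .
    qed
  qed
  have nonneg: "0 \<le> normv v (\<lambda>z. T (fs n) z - T f z)" for n
    using normv_nonneg[OF v_nonneg Hv_diff[OF v_nonneg T_Hv[OF fs] T_Hv[OF f]]] .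
  show "\<exists>N. \<forall>n\<ge>N. norm (normv v (\<lambda>z. T (fs n) z - T f z) - 0) < e"
  proof (intro exI[of _ N] allI impI)
    fix n assume "N \<le> n"
    then show "norm (normv v (\<lambda>z. T (fs n) z - T f z) - 0) < e"
      using small[of n] nonneg[of n] \<open>e > 0\<close> by simp
  qed
qed

lemma tends0_imp_compact_Hv0:
  assumes t: "tends0_bdry (\<lambda>z. v z * adj_eval_norm z)"
  shows "compact_op X nX (Hv0 v) (normv v) T"
  unfolding compact_op_def
proof (intro conjI ballI allI impI)
  fix fs :: "nat \<Rightarrow> cfun" assume fs: "\<forall>n. fs n \<in> X \<and> nX (fs n) \<le> 1"
  then obtain \<sigma> f where "strict_mono \<sigma>" and f: "f \<in> X" and conv: "uc_conv (fs \<circ> \<sigma>) f"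
    using initial unfolding initial_space_def by blast
  have "uc_conv (\<lambda>n. T (fs (\<sigma> n))) (T f)"
    using intrinsic_uc_conv[OF intrinsic _ X_HD[OF f] conv] fs X_HD by simp
  moreover have "nX (\<lambda>z. fs (\<sigma> n) z - f z) \<le> 1 + nX f" for n
    using nX_diff_le[OF _ f, of "fs (\<sigma> n)"] fs by (metis add.commute add_right_mono order_trans)
  ultimately have "(\<lambda>n. normv v (\<lambda>z. T (fs (\<sigma> n)) z - T f z)) \<longlonglongrightarrow> 0"
    using fs f by (intro normv_T_diff_tendsto_0[OF t]) auto
  then show "\<exists>\<sigma> g. strict_mono \<sigma> \<and> g \<in> Hv0 v \<and> (\<lambda>n. normv v (\<lambda>z. T (fs (\<sigma> n)) z - g z)) \<longlonglongrightarrow> 0"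
    using \<open>strict_mono \<sigma>\<close> T_Hv0_of_tends0[OF t f] by blast
qed (rule T_Hv0_of_tends0[OF t])

text \<open>If \<open>v(z\<^sub>n) \<parallel>T*K\<^bsub>z\<^sub>n\<^esub>\<parallel> \<ge> e\<close> along \<open>|z\<^sub>n| \<rightarrow> 1\<close>, pick \<open>f\<^sub>n\<close> in the unit ball nearly attaining the norm;
  a norm limit \<open>g \<in> H\<^sub>v\<^sub>,\<^sub>0\<close> of a subsequence of \<open>T f\<^sub>n\<close> would force \<open>v(z\<^sub>n) |g(z\<^sub>n)| \<ge> e/4\<close> eventually.\<close>

lemma compact_Hv0_imp_tends0:
  assumes compact: "compact_op X nX (Hv0 v) (normv v) T"
  shows "tends0_bdry (\<lambda>z. v z * adj_eval_norm z)"
proof (rule ccontr)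
  assume "\<not> ?thesis"
  then obtain e zs where "e > 0" and zs: "\<And>n. zs n \<in> ball 0 1"
    and large: "\<And>n. e \<le> \<bar>v (zs n) * adj_eval_norm (zs n)\<bar>" and lim_zs: "filterlim zs at_bdry sequentially"
    by (rule not_tends0_bdry_imp_seq[of "\<lambda>z. v z * adj_eval_norm z"]) blast+
  have "\<exists>f. f \<in> X \<and> nX f \<le> 1 \<and> e / 2 < v (zs n) * cmod (T f (zs n))" for n
  proof -
    have "e \<le> v (zs n) * adj_eval_norm (zs n)"
      using large[of n] v_pos[OF zs] adj_eval_norm_nonneg[OF zs] by (simp add: abs_mult abs_of_pos)
    then have "e / 2 / v (zs n) < adj_eval_norm (zs n)"
      using v_pos[OF zs] \<open>e > 0\<close> by (simp add: divide_less_eq mult.commute)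
    then obtain f where "f \<in> X" "nX f \<le> 1" "e / 2 / v (zs n) < cmod (T f (zs n))"
      using less_adj_eval_norm_imp[OF zs] by blast
    then show ?thesis
      using v_pos[OF zs] by (auto simp: divide_less_eq mult_ac)
  qed
  then obtain fs where fs: "\<And>n. fs n \<in> X" "\<And>n. nX (fs n) \<le> 1"
    and attained: "\<And>n. e / 2 < v (zs n) * cmod (T (fs n) (zs n))"
    by metis
  then obtain \<sigma> g where "strict_mono \<sigma>" and g: "g \<in> Hv0 v"
    and lim: "(\<lambda>n. normv v (\<lambda>z. T (fs (\<sigma> n)) z - g z)) \<longlonglongrightarrow> 0"
    using compact unfolding compact_op_def by meson
  have "\<forall>\<^sub>F z in at_bdry. v z * cmod (g z) < e / 4"
    using g \<open>e > 0\<close> by (auto simp: Hv0_def tends0_bdry_iff_tendsto tendsto_iff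
      elim!: allE[of _ "e / 4"] eventually_mono)
  then have "\<forall>\<^sub>F n in sequentially. v (zs (\<sigma> n)) * cmod (g (zs (\<sigma> n))) < e / 4"
    using eventually_compose_filterlim filterlim_compose[OF lim_zs filterlim_subseq[OF \<open>strict_mono \<sigma>\<close>]]
    by blast
  moreover have "\<forall>\<^sub>F n in sequentially. normv v (\<lambda>z. T (fs (\<sigma> n)) z - g z) < e / 4"
    using lim \<open>e > 0\<close> by (auto simp: tendsto_iff elim!: allE[of _ "e / 4"] eventually_mono)
  ultimately obtain n where gn: "v (zs (\<sigma> n)) * cmod (g (zs (\<sigma> n))) < e / 4"
    and dn: "normv v (\<lambda>z. T (fs (\<sigma> n)) z - g z) < e / 4"
    using eventually_conj eventually_happens' trivial_limit_sequentially by blast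
  define z where "z = zs (\<sigma> n)"
  have "v z * cmod (T (fs (\<sigma> n)) z)
      \<le> v z * cmod (T (fs (\<sigma> n)) z - g z) + v z * cmod (g z)"
    using v_nonneg[OF zs] norm_triangle_ineq[of "T (fs (\<sigma> n)) z - g z" "g z"]
    by (simp add: z_def mult_left_mono flip: distrib_left)
  also have "\<dots> < e / 2"
    using normv_upper[OF Hv_diff[OF v_nonneg T_Hv[OF fs(1)]], of g z "\<sigma> n"] g zs gn dn
    by (simp add: z_def Hv0_def)
  finally show False
    using attained[of "\<sigma> n"] by (simp add: z_def)
qed

lemma compact_Hv_imp_T_Hv0_unit_dil:
  assumes compact: "compact_op X nX (Hv v) (normv v) T"
    and dil: "\<forall>f\<in>X. \<forall>r. 0 \<le> r \<and> r < 1 \<longrightarrow> dil r f \<in> X \<and> nX (dil r f) \<le> C * nX f"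
    and T_dil: "\<forall>f\<in>X. \<forall>r. 0 \<le> r \<and> r < 1 \<longrightarrow> T (dil r f) \<in> Hv0 v"
    and f: "f \<in> X" and small: "C * nX f \<le> 1"
  shows "T f \<in> Hv0 v"
proof -
  define r :: "nat \<Rightarrow> real" where "r n = real n / real (Suc n)" for n
  have r: "0 \<le> r n \<and> r n < 1" for n
    by (simp add: r_def)
  have fs: "dil (r n) f \<in> X" "nX (dil (r n) f) \<le> 1" for n
    using dil f r[of n] small by force+
  then obtain \<sigma> g where "strict_mono \<sigma>" and g: "g \<in> Hv v"
    and lim: "(\<lambda>n. normv v (\<lambda>z. T (dil (r (\<sigma> n)) f) z - g z)) \<longlonglongrightarrow> 0"
    using compact unfolding compact_op_def by meson
  have "g \<in> Hv0 v"
    by (intro Hv0_closed[OF v_nonneg _ g lim] T_dil[rule_format, OF f r])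
  have "(r \<circ> \<sigma>) \<longlonglongrightarrow> 1"
    using LIMSEQ_subseq_LIMSEQ[OF LIMSEQ_n_over_Suc_n \<open>strict_mono \<sigma>\<close>] by (simp add: r_def[abs_def])
  then have "uc_conv (\<lambda>n. dil (r (\<sigma> n)) f) f"
    using uc_conv_dil[OF X_HD[OF f]] r by (simp add: o_def)
  then have conv: "uc_conv (\<lambda>n. T (dil (r (\<sigma> n)) f)) (T f)"
    using intrinsic_uc_conv[OF intrinsic X_HD[OF fs(1)] X_HD[OF f]] by blast
  have "g = T f"
  proof (rule HD_eqI)
    show "g \<in> HD" "T f \<in> HD"
      using g X_HD[OF f] intrinsic_HD[OF intrinsic] by (auto simp: Hv_def)
  next
    fix z :: complex assume z: "z \<in> ball 0 1"
    show "g z = T f z"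
      using tendsto_of_normv_tendsto[OF v_nonneg T_Hv[OF fs(1)] g lim z v_pos[OF z]]
        uc_conv_imp_tendsto[OF conv z] by (rule LIMSEQ_unique)
  qed
  with \<open>g \<in> Hv0 v\<close> show ?thesis
    by simp
qed

lemma compact_Hv_imp_T_Hv0:
  assumes compact: "compact_op X nX (Hv v) (normv v) T"
    and dil: "\<forall>f\<in>X. \<forall>r. 0 \<le> r \<and> r < 1 \<longrightarrow> dil r f \<in> X \<and> nX (dil r f) \<le> C * nX f"
    and T_dil: "\<forall>f\<in>X. \<forall>r. 0 \<le> r \<and> r < 1 \<longrightarrow> T (dil r f) \<in> Hv0 v"
    and f: "f \<in> X"
  shows "T f \<in> Hv0 v"
proof -
  have pos: "\<bar>C\<bar> * nX f + 1 > 0"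
    using nX_nonneg[OF f] by (simp add: add_nonneg_pos)
  define c where "c = inverse (\<bar>C\<bar> * nX f + 1)"
  have "c > 0"
    using pos by (simp add: c_def)
  have "C * nX (\<lambda>z. complex_of_real c * f z) \<le> 1"
  proof -
    have "C * nX (\<lambda>z. complex_of_real c * f z) = C * nX f * c"
      using \<open>c > 0\<close> by (simp add: nX_scale[OF f])
    also have "\<dots> \<le> (\<bar>C\<bar> * nX f + 1) * c"
      using \<open>c > 0\<close> nX_nonneg[OF f] abs_ge_self[of C]
      by (intro mult_right_mono) (auto intro: mult_right_mono order_trans)
    also have "\<dots> = 1"
      using pos by (simp add: c_def)
    finally show ?thesis .
  qed
  then have "T (\<lambda>z. complex_of_real c * f z) \<in> Hv0 v"
    using scale_in_X[OF f] by (rule compact_Hv_imp_T_Hv0_unit_dil[OF compact dil T_dil, rotated])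
  then have "(\<lambda>z. complex_of_real c * T f z) \<in> Hv0 v"
    by (simp only: intrinsic_scale[OF intrinsic X_HD[OF f]])
  from Hv0_scale[OF v_nonneg this, of "inverse (complex_of_real c)"] show ?thesis
    using \<open>c > 0\<close> by (simp add: mult.assoc[symmetric])
qed

end

theorem theorem3p4:
  fixes v :: "complex \<Rightarrow> real" and X :: "cfun set" and nX :: "cfun \<Rightarrow> real"
    and T :: "cfun \<Rightarrow> cfun" and C :: real
  assumes "typical_weight v"
    and "initial_space X nX"
    and "\<forall>f\<in>X. \<forall>r. 0 \<le> r \<and> r < 1 \<longrightarrow> dil r f \<in> X \<and> nX (dil r f) \<le> C * nX f"
    and "intrinsic T"
    and "bounded_op X nX (Hv v) (normv v) T"
    and "\<forall>f\<in>X. \<forall>r. 0 \<le> r \<and> r < 1 \<longrightarrow> T (dil r f) \<in> Hv0 v"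
  shows "(compact_op X nX (Hv v) (normv v) T \<longleftrightarrow> compact_op X nX (Hv0 v) (normv v) T)
       \<and> (compact_op X nX (Hv0 v) (normv v) T \<longleftrightarrow>
          tends0_bdry (\<lambda>z. v z * dual_norm X nX (adjoint_op T (point_eval z))))"
proof -
  interpret intrinsic_op_into_Hv v X nX T
    using assms by unfold_locales
  have "compact_op X nX (Hv0 v) (normv v) T" if "compact_op X nX (Hv v) (normv v) T"
    using that by (intro compact_op_Hv_imp_Hv0 v_nonneg compact_Hv_imp_T_Hv0[OF that assms(3,6)])
  then show ?thesis
    using compact_op_Hv0_imp_Hv compact_Hv0_imp_tends0 tends0_imp_compact_Hv0 by blast
qed

end
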